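(* Consider the directed Poisson process stochastic block model with $n$ individuals, $Q$ groups, parameter $\theta=(\pi,\alpha)$, and observations $\mathcal O=\{(t_m,i_m,j_m): m=1,\dots,M\}$ on $[0,T]$. Let $$\mathcal T=\Big\{\tau=(\tau^{i,q})_{i\le n,q\le Q}:\ \tau^{i,q}\ge0,\ \textstyle\sum_{q=1}^Q\tau^{i,q}=1\ \text{for all } i\Big\},$$ and for $\tau\in\mathcal T$ let $\mathrm{pr}_\tau(\cdot\mid\mathcal O)$ be the factorized distribution on $\mathcal Z=(Z_1,\dots,Z_n)$ given by $\mathrm{pr}_\tau\{\mathcal Z=(q_1,\dots,q_n)\mid\mathcal O\}=\prod_{i=1}^n\tau^{i,q_i}$. Then the solution $\hat\tau$ of $$\hat\tau=\operatorname{Argmin}_{\tau\in\mathcal T}\mathrm{KL}\big(\mathrm{pr}_\tau(\cdot\mid\mathcal O)\,\big\|\,\mathrm{pr}_\theta(\cdot\mid\mathcal O)\big)$$ satisfies the fixed point equation $$\hat\tau^{i,q}=\frac{\pi_q\exp\{D_{iq}(\hat\tau,\alpha)\}}{\sum_{q'=1}^Q\pi_{q'}\exp\{D_{iq'}(\hat\tau,\alpha)\}},\qquad (i=1,\dots,n;\ q=1,\dots,Q),$$ where $$D_{iq}(\tau,\alpha)=-\sum_{l=1}^Q\sum_{j\ne i}\tau^{j,l}\{A^{(q,l)}(T)+A^{(l,q)}(T)\}+\sum_{l=1}^Q\sum_{m=1}^M\Big[\mathbf 1_{\{i_m=i\}}\tau^{j_m,l}\log\{\alpha^{(q,l)}(t_m)\}+\mathbf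 1_{\{j_m=i\}}\tau^{i_m,l}\log\{\alpha^{(l,q)}(t_m)\}\Big].$$
   Context: Directed Poisson process stochastic block model: $n$ individuals, dyads $\mathcal R=\{(i,j): i\ne j\}$. Latent $Z_1,\dots,Z_n$ i.i.d. in $\{1,\dots,Q\}$ with $\mathrm{pr}(Z_1=q)=\pi_q>0$. Conditionally on the $Z_i$'s, the counting processes $N_{i,j}$, $(i,j)\in\mathcal R$, on $[0,T]$ are independent inhomogeneous Poisson processes with intensity $\alpha^{(Z_i,Z_j)}$, where the $\alpha^{(q,l)}$ are nonnegative functions with cumulative intensities $A^{(q,l)}(t)=\int_0^t\alpha^{(q,l)}(u)\,du$. The observations are the events $\mathcal O=\{(t_m,i_m,j_m)\}_{m=1}^M$, meaning an interaction from $i_m$ to $j_m$ at time $t_m$, with $0<t_1<\dots<t_M<T$. $\mathrm{pr}_\theta(\cdot\mid\mathcal O)$ is the true conditional distribution of $\mathcal Z$ given $\mathcal O$, derived from the complete-data likelihood $\mathcal L(\mathcal O,\mathcal Z\mid\theta)=\exp\{-\sum_{(i,j)\in\mathcal R}A^{(Z_i,Z_j)}(T)\}\prod_{m=1}^M\alpha^{(Z_{i_m},Z_{j_m})}(t_m)\prod_{i=1}^n\pi_{Z_i}$. $\mathrm{KL}$ denotes Kullback–Leibler divergence and $\mathbf 1_A$ the indicator of $A$. *)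

theory Defs
  imports "HOL-Analysis.Analysis"
begin

text \<open>Conventions: individuals are 0,...,n-1, groups are 0,...,Q-1, events are
indexed by m = 0,...,M-1.  The event m is (t m, ii m, jj m).\<close>

definition cumint :: "(nat \<Rightarrow> nat \<Rightarrow> real \<Rightarrow> real) \<Rightarrow> nat \<Rightarrow> nat \<Rightarrow> real \<Rightarrow> real" where
  "cumint alpha q l t = integral {0..t} (alpha q l)"

definition dyads :: "nat \<Rightarrow> (nat \<times> nat) set" where
  "dyads n = {(i,j). i < n \<and> j < n \<and> i \<noteq> j}"

definition configs :: "nat \<Rightarrow> nat \<Rightarrow> (nat \<Rightarrow> nat) set" where
  "configs n Q = PiE {..<n} (\<lambda>_. {..<Q})"

definition complete_lik ::
  "nat \<Rightarrow> (nat \<Rightarrow> real) \<Rightarrow> (nat \<Rightarrow> nat \<Rightarrow> real \<Rightarrow> real) \<Rightarrow> real \<Rightarrow> nat \<Rightarrow>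
   (nat \<Rightarrow> real) \<Rightarrow> (nat \<Rightarrow> nat) \<Rightarrow> (nat \<Rightarrow> nat) \<Rightarrow> (nat \<Rightarrow> nat) \<Rightarrow> real" where
  "complete_lik n piv alpha T M t ii jj z =
     exp (- (\<Sum>(i,j)\<in>dyads n. cumint alpha (z i) (z j) T))
     * (\<Prod>m<M. alpha (z (ii m)) (z (jj m)) (t m))
     * (\<Prod>i<n. piv (z i))"

definition posterior ::
  "nat \<Rightarrow> nat \<Rightarrow> (nat \<Rightarrow> real) \<Rightarrow> (nat \<Rightarrow> nat \<Rightarrow> real \<Rightarrow> real) \<Rightarrow> real \<Rightarrow> nat \<Rightarrow>
   (nat \<Rightarrow> real) \<Rightarrow> (nat \<Rightarrow> nat) \<Rightarrow> (nat \<Rightarrow> nat) \<Rightarrow> (nat \<Rightarrow> nat) \<Rightarrow> real" where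
  "posterior n Q piv alpha T M t ii jj z =
     complete_lik n piv alpha T M t ii jj z /
     (\<Sum>z'\<in>configs n Q. complete_lik n piv alpha T M t ii jj z')"

definition var_params :: "nat \<Rightarrow> nat \<Rightarrow> (nat \<Rightarrow> nat \<Rightarrow> real) set" where
  "var_params n Q = {tau. \<forall>i<n. (\<forall>q<Q. 0 \<le> tau i q) \<and> (\<Sum>q<Q. tau i q) = 1}"

definition factorized :: "nat \<Rightarrow> (nat \<Rightarrow> nat \<Rightarrow> real) \<Rightarrow> (nat \<Rightarrow> nat) \<Rightarrow> real" where
  "factorized n tau z = (\<Prod>i<n. tau i (z i))"

definition KL :: "'a set \<Rightarrow> ('a \<Rightarrow> real) \<Rightarrow> ('a \<Rightarrow> real) \<Rightarrow> ereal" where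
  "KL S p q =
     (if \<exists>z\<in>S. p z \<noteq> 0 \<and> q z = 0 then \<infinity>
      else ereal (\<Sum>z\<in>S. if p z = 0 then 0 else p z * ln (p z / q z)))"

definition Dfun ::
  "nat \<Rightarrow> nat \<Rightarrow> (nat \<Rightarrow> nat \<Rightarrow> real \<Rightarrow> real) \<Rightarrow> real \<Rightarrow> nat \<Rightarrow>
   (nat \<Rightarrow> real) \<Rightarrow> (nat \<Rightarrow> nat) \<Rightarrow> (nat \<Rightarrow> nat) \<Rightarrow> (nat \<Rightarrow> nat \<Rightarrow> real) \<Rightarrow> nat \<Rightarrow> nat \<Rightarrow> real" where
  "Dfun n Q alpha T M t ii jj tau i q =
     - (\<Sum>l<Q. \<Sum>j\<in>{..<n} - {i}. tau j l * (cumint alpha q l T + cumint alpha l q T))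
     + (\<Sum>l<Q. \<Sum>m<M.
          (if ii m = i then tau (jj m) l * ln (alpha q l (t m)) else 0)
        + (if jj m = i then tau (ii m) l * ln (alpha l q (t m)) else 0))"

end

theory Submission
  imports Defs
begin

text \<open>Up to the constant log-evidence, the divergence from a factorized law to the posterior is
  the variational free energy E_tau[log pr_tau] - E_tau[log L].  Under a product law, the
  expectation of a function of one or two coordinates involves only the corresponding rows of tau,
  so as a function of the single row x = tau^{i,.} the free energy is
  sum_q x_q log x_q - sum_q x_q (log pi_q + D_iq(tau)) plus a term not depending on x.  By Gibbs'
  inequality the unique minimizer of this over the simplex is the softmax of
  log pi_q + D_iq(tau); hence every row of a global minimizer is that softmax.\<close>

lemma prod_if_two_points:
  fixes x y :: "'a \<Rightarrow> 'b::comm_monoid_mult"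
  assumes "finite S" "a \<in> S" "b \<in> S" "a \<noteq> b"
  shows "(\<Prod>k\<in>S. if k = a then x k else if k = b then y k else 1) = x a * y b"
proof -
  have "(\<Prod>k\<in>S. if k = a then x k else if k = b then y k else 1)
      = (\<Prod>k\<in>S. (if k = a then x k else 1) * (if k = b then y k else 1))"
    using assms(4) by (intro prod.cong) auto
  also have "\<dots> = x a * y b"
    using assms by (simp add: prod.distrib prod.delta)
  finally show ?thesis .
qed

lemma configs_finite: "finite (configs n Q)"
  unfolding configs_def by (rule finite_PiE) auto

lemma configs_lessThan: "z \<in> configs n Q \<Longrightarrow> k < n \<Longrightarrow> z k < Q"
  by (auto simp: configs_def PiE_def Pi_def)

lemma configs_nonempty: "0 < Q \<Longrightarrow> configs n Q \<noteq> {}"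
  unfolding configs_def by (auto simp: PiE_eq_empty_iff)

lemma sum_configs_prod:
  "(\<Sum>z\<in>configs n Q. \<Prod>k<n. w k (z k)) = (\<Prod>k<n. \<Sum>l<Q. (w k l :: real))"
  unfolding configs_def by (rule prod_sum_PiE[symmetric]) auto

definition factorized_expectation ::
  "nat \<Rightarrow> nat \<Rightarrow> (nat \<Rightarrow> nat \<Rightarrow> real) \<Rightarrow> ((nat \<Rightarrow> nat) \<Rightarrow> real) \<Rightarrow> real" where
  "factorized_expectation n Q tau h = (\<Sum>z\<in>configs n Q. factorized n tau z * h z)"

lemma factorized_expectation_cong:
  "(\<And>z. z \<in> configs n Q \<Longrightarrow> h z = h' z) \<Longrightarrow>
   factorized_expectation n Q tau h = factorized_expectation n Q tau h'"
  unfolding factorized_expectation_def by simp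

lemma factorized_expectation_add:
  "factorized_expectation n Q tau (\<lambda>z. g z + h z)
   = factorized_expectation n Q tau g + factorized_expectation n Q tau h"
  unfolding factorized_expectation_def by (simp add: distrib_left sum.distrib)

lemma factorized_expectation_diff:
  "factorized_expectation n Q tau (\<lambda>z. g z - h z)
   = factorized_expectation n Q tau g - factorized_expectation n Q tau h"
  unfolding factorized_expectation_def by (simp add: right_diff_distrib sum_subtractf)

lemma factorized_expectation_sum:
  "factorized_expectation n Q tau (\<lambda>z. \<Sum>p\<in>I. h p z) = (\<Sum>p\<in>I. factorized_expectation n Q tau (h p))"
  unfolding factorized_expectation_def by (simp add: sum_distrib_left sum.swap[of _ "configs n Q"])

lemma factorized_expectation_prod:
  "factorized_expectation n Q tau (\<lambda>z. \<Prod>k<n. g k (z k)) = (\<Prod>k<n. \<Sum>l<Q. tau k l * g k l)"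
  unfolding factorized_expectation_def factorized_def
  by (simp add: prod.distrib[symmetric] sum_configs_prod[of "\<lambda>k l. tau k l * g k l"])

lemma var_params_row_sum: "tau \<in> var_params n Q \<Longrightarrow> k < n \<Longrightarrow> (\<Sum>l<Q. tau k l) = 1"
  by (simp add: var_params_def)

lemma factorized_expectation_const:
  assumes "tau \<in> var_params n Q"
  shows "factorized_expectation n Q tau (\<lambda>_. c) = c"
  using factorized_expectation_prod[of n Q tau "\<lambda>_ _. 1"] assms
  by (simp add: var_params_row_sum factorized_expectation_def sum_distrib_right[symmetric])

lemma factorized_expectation_coordinate:
  assumes "tau \<in> var_params n Q" "a < n"
  shows "factorized_expectation n Q tau (\<lambda>z. \<phi> (z a)) = (\<Sum>l<Q. tau a l * \<phi> l)"
proof -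
  have "factorized_expectation n Q tau (\<lambda>z. \<phi> (z a))
      = factorized_expectation n Q tau (\<lambda>z. \<Prod>k<n. if k = a then \<phi> (z k) else 1)"
    using assms(2) by (intro factorized_expectation_cong) (simp add: prod.delta)
  also have "\<dots> = (\<Prod>k<n. \<Sum>l<Q. tau k l * (if k = a then \<phi> l else 1))"
    using factorized_expectation_prod[of n Q tau "\<lambda>k l. if k = a then \<phi> l else 1"] by simp
  also have "\<dots> = (\<Prod>k<n. if k = a then \<Sum>l<Q. tau a l * \<phi> l else 1)"
    using assms(1) by (intro prod.cong) (auto simp: var_params_row_sum)
  finally show ?thesis
    using assms(2) by (simp add: prod.delta)
qed

text \<open>Writing \<phi> (z a) (z b) as the sum over l1 of [z a = l1] * \<phi> l1 (z b) turns it into a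
  sum of products of functions of single coordinates.\<close>
lemma factorized_expectation_pair:
  assumes tau: "tau \<in> var_params n Q" and "a < n" "b < n" "a \<noteq> b"
  shows "factorized_expectation n Q tau (\<lambda>z. \<phi> (z a) (z b))
       = (\<Sum>l1<Q. \<Sum>l2<Q. tau a l1 * tau b l2 * \<phi> l1 l2)"
proof -
  define g where "g l1 k l = (if k = a then of_bool (l = l1) else if k = b then \<phi> l1 l else 1)"
    for l1 k l
  have "\<phi> (z a) (z b) = (\<Sum>l1<Q. \<Prod>k<n. g l1 k (z k))" if "z \<in> configs n Q" for z
  proof -
    have "(\<Sum>l1<Q. \<Prod>k<n. g l1 k (z k)) = (\<Sum>l1<Q. of_bool (z a = l1) * \<phi> l1 (z b))"
      unfolding g_def using assms by (subst prod_if_two_points) auto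
    also have "\<dots> = (\<Sum>l1<Q. if z a = l1 then \<phi> l1 (z b) else 0)"
      by (intro sum.cong) auto
    also have "\<dots> = \<phi> (z a) (z b)"
      using configs_lessThan[OF that \<open>a < n\<close>] by simp
    finally show ?thesis by simp
  qed
  then have "factorized_expectation n Q tau (\<lambda>z. \<phi> (z a) (z b))
      = (\<Sum>l1<Q. \<Prod>k<n. \<Sum>l<Q. tau k l * g l1 k l)"
    by (simp add: factorized_expectation_cong factorized_expectation_sum factorized_expectation_prod)
  also have "\<dots> = (\<Sum>l1<Q. \<Prod>k<n. if k = a then tau a l1 else if k = b then \<Sum>l<Q. tau b l * \<phi> l1 l else 1)"
  proof (intro sum.cong prod.cong refl)
    fix l1 k assume "l1 \<in> {..<Q}" "k \<in> {..<n}"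
    then show "(\<Sum>l<Q. tau k l * g l1 k l)
        = (if k = a then tau a l1 else if k = b then \<Sum>l<Q. tau b l * \<phi> l1 l else 1)"
      using tau unfolding g_def by (auto simp: var_params_row_sum)
  qed
  also have "\<dots> = (\<Sum>l1<Q. \<Sum>l2<Q. tau a l1 * tau b l2 * \<phi> l1 l2)"
    using assms by (simp add: prod_if_two_points sum_distrib_left mult_ac)
  finally show ?thesis .
qed

lemma xlnx_tangent_gap:
  fixes x s :: real
  assumes "0 \<le> x" "0 < s"
  shows xlnx_tangent_gap_nonneg: "0 \<le> x * ln x - x * ln s - x + s"
    and xlnx_tangent_gap_eq_0: "x * ln x - x * ln s - x + s = 0 \<Longrightarrow> x = s"
proof -
  consider "x = 0" | "0 < x" using assms(1) by linarith
  then have "0 \<le> x * ln x - x * ln s - x + s \<and> (x * ln x - x * ln s - x + s = 0 \<longrightarrow> x = s)"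
  proof cases
    case 2
    have gap: "x * ln x - x * ln s - x + s = x * ((s / x - 1) - ln (s / x))"
      using 2 assms(2) by (simp add: ln_div field_simps)
    have "ln (s / x) \<le> s / x - 1"
      using 2 assms(2) by (intro ln_le_minus_one) simp
    moreover have "x = s" if "ln (s / x) = s / x - 1"
      using ln_eq_minus_one[OF _ that] 2 assms(2) by simp
    ultimately show ?thesis
      unfolding gap using 2 by (auto simp: mult_le_0_iff)
  qed (use assms(2) in simp)
  then show "0 \<le> x * ln x - x * ln s - x + s" "x * ln x - x * ln s - x + s = 0 \<Longrightarrow> x = s"
    by blast+
qed

lemma gibbs_inequality_eq:
  fixes x s :: "'a \<Rightarrow> real"
  assumes "finite S" "\<forall>q\<in>S. 0 \<le> x q" "\<forall>q\<in>S. 0 < s q" "sum x S = sum s S"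
    and "(\<Sum>q\<in>S. x q * ln (x q) - x q * ln (s q)) \<le> 0"
  shows "\<forall>q\<in>S. x q = s q"
proof -
  let ?gap = "\<lambda>q. x q * ln (x q) - x q * ln (s q) - x q + s q"
  have nonneg: "\<forall>q\<in>S. 0 \<le> ?gap q"
    using assms(2,3) xlnx_tangent_gap_nonneg by blast
  have "(\<Sum>q\<in>S. ?gap q) = (\<Sum>q\<in>S. x q * ln (x q) - x q * ln (s q)) - sum x S + sum s S"
    by (simp add: sum.distrib sum_subtractf)
  moreover have "0 \<le> (\<Sum>q\<in>S. ?gap q)"
    using nonneg by (intro sum_nonneg) blast
  ultimately have "(\<Sum>q\<in>S. ?gap q) = 0"
    using assms(4,5) by linarith
  then have "\<forall>q\<in>S. ?gap q = 0"
    using assms(1) nonneg by (simp add: sum_nonneg_eq_0_iff)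
  then show ?thesis
    using assms(2,3) xlnx_tangent_gap_eq_0 by blast
qed

text \<open>Since ln of the softmax is c minus a constant, the objective exceeds its value at
  the softmax by the relative entropy with respect to the softmax.\<close>
lemma softmax_unique_minimizer:
  fixes x c :: "'a \<Rightarrow> real" and S :: "'a set"
  defines "s \<equiv> \<lambda>q. exp (c q) / (\<Sum>q'\<in>S. exp (c q'))"
  assumes "finite S" "\<forall>q\<in>S. 0 \<le> x q" "sum x S = 1"
    and "(\<Sum>q\<in>S. x q * ln (x q) - x q * c q) \<le> (\<Sum>q\<in>S. s q * ln (s q) - s q * c q)"
  shows "\<forall>q\<in>S. x q = s q"
proof -
  define Z where "Z = (\<Sum>q\<in>S. exp (c q))"
  have "S \<noteq> {}" using assms(4) by auto
  then have "0 < Z" unfolding Z_def using assms(2) by (intro sum_pos) auto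
  have s_eq: "s = (\<lambda>q. exp (c q) / Z)"
    unfolding s_def Z_def ..
  have s_pos: "\<forall>q\<in>S. 0 < s q"
    unfolding s_eq using \<open>0 < Z\<close> by simp
  have ln_s: "ln (s q) = c q - ln Z" for q
    unfolding s_eq using \<open>0 < Z\<close> by (simp add: ln_div)
  have s_sum: "sum s S = 1"
    unfolding s_eq using \<open>0 < Z\<close> by (simp add: sum_divide_distrib[symmetric] Z_def)
  have "(\<Sum>q\<in>S. y q * ln (s q)) = (\<Sum>q\<in>S. y q * c q) - ln Z" if "sum y S = 1" for y
  proof -
    have "(\<Sum>q\<in>S. y q * ln (s q)) = (\<Sum>q\<in>S. y q * c q) - sum y S * ln Z"
      unfolding ln_s by (simp add: right_diff_distrib sum_subtractf sum_distrib_right)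
    then show ?thesis using that by simp
  qed
  from this[of x] this[of s] have "(\<Sum>q\<in>S. x q * ln (x q) - x q * ln (s q)) \<le> 0"
    using assms(4,5) s_sum by (simp add: sum_subtractf)
  then show ?thesis
    using gibbs_inequality_eq[OF assms(2,3) s_pos] assms(4) s_sum by argo
qed

lemma sum_fun_upd_row:
  fixes i n :: nat
  assumes "i < n"
  shows "(\<Sum>k<n. F k ((tau(i := x)) k)) = F i x + (\<Sum>k\<in>{..<n} - {i}. F k (tau k))"
proof -
  have "(\<Sum>k<n. F k ((tau(i := x)) k))
      = F i ((tau(i := x)) i) + (\<Sum>k\<in>{..<n} - {i}. F k ((tau(i := x)) k))"
    by (rule sum.remove) (use assms in auto)
  also have "(\<Sum>k\<in>{..<n} - {i}. F k ((tau(i := x)) k)) = (\<Sum>k\<in>{..<n} - {i}. F k (tau k))"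
    by (intro sum.cong) auto
  finally show ?thesis by simp
qed

lemma bilinear_fun_upd_row:
  fixes B :: "nat \<Rightarrow> nat \<Rightarrow> real"
  assumes "a \<noteq> b"
  shows "(\<Sum>l1<Q. \<Sum>l2<Q. (tau(i := x)) a l1 * (tau(i := x)) b l2 * B l1 l2)
    = (\<Sum>l1<Q. \<Sum>l2<Q. (tau(i := (\<lambda>_. 0))) a l1 * (tau(i := (\<lambda>_. 0))) b l2 * B l1 l2)
      + (\<Sum>q<Q. x q * (\<Sum>l<Q. (if a = i then tau b l * B q l else 0)
                                + (if b = i then tau a l * B l q else 0)))"
proof -
  consider "a = i" | "b = i" | "a \<noteq> i" "b \<noteq> i" by blast
  then show ?thesis
  proof cases
    case 1
    then show ?thesis
      using assms by (simp add: sum_distrib_left mult_ac)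
  next
    case 2
    have "(\<Sum>l1<Q. \<Sum>l2<Q. tau a l1 * x l2 * B l1 l2) = (\<Sum>l2<Q. \<Sum>l1<Q. tau a l1 * x l2 * B l1 l2)"
      by (rule sum.swap)
    then show ?thesis
      using 2 assms by (simp add: sum_distrib_left mult_ac)
  next
    case 3
    then show ?thesis by simp
  qed
qed

lemma sum_dyads_if_fst:
  assumes "i < n"
  shows "(\<Sum>(a, b)\<in>dyads n. if a = i then f b else 0) = (\<Sum>b\<in>{..<n} - {i}. (f b :: real))"
proof -
  have dyads: "dyads n = Sigma {..<n} (\<lambda>a. {..<n} - {a})" by (auto simp: dyads_def)
  have "(\<Sum>(a, b)\<in>dyads n. if a = i then f b else 0)
      = (\<Sum>a<n. \<Sum>b\<in>{..<n} - {a}. if a = i then f b else 0)"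
    unfolding dyads by (subst sum.Sigma) auto
  also have "\<dots> = (\<Sum>a<n. if a = i then (\<Sum>b\<in>{..<n} - {a}. f b) else 0)"
    by (intro sum.cong) auto
  finally show ?thesis
    using assms by simp
qed

lemma sum_dyads_if_snd:
  assumes "i < n"
  shows "(\<Sum>(a, b)\<in>dyads n. if b = i then f a else 0) = (\<Sum>a\<in>{..<n} - {i}. (f a :: real))"
proof -
  have dyads: "dyads n = Sigma {..<n} (\<lambda>a. {..<n} - {a})" by (auto simp: dyads_def)
  have "(\<Sum>(a, b)\<in>dyads n. if b = i then f a else 0)
      = (\<Sum>a<n. \<Sum>b\<in>{..<n} - {a}. if b = i then f a else 0)"
    unfolding dyads by (subst sum.Sigma) auto
  also have "\<dots> = (\<Sum>a<n. if a \<noteq> i then f a else 0)"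
    using assms by (intro sum.cong refl) (subst sum.delta, auto)
  also have "\<dots> = (\<Sum>a\<in>{..<n} - {i}. f a)"
    by (simp add: sum.If_cases Diff_eq Compl_eq)
  finally show ?thesis .
qed

lemma bilinear_sum_fun_upd_row:
  fixes B :: "'p \<Rightarrow> nat \<Rightarrow> nat \<Rightarrow> real"
  assumes "\<forall>p\<in>I. u p \<noteq> v p"
  shows "(\<Sum>p\<in>I. \<Sum>l1<Q. \<Sum>l2<Q. (tau(i := x)) (u p) l1 * (tau(i := x)) (v p) l2 * B p l1 l2)
    = (\<Sum>p\<in>I. \<Sum>l1<Q. \<Sum>l2<Q. (tau(i := (\<lambda>_. 0))) (u p) l1 * (tau(i := (\<lambda>_. 0))) (v p) l2 * B p l1 l2)
      + (\<Sum>q<Q. x q * (\<Sum>l<Q. \<Sum>p\<in>I. (if u p = i then tau (v p) l * B p q l else 0)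
                                        + (if v p = i then tau (u p) l * B p l q else 0)))"
proof -
  let ?F = "\<lambda>p q l. (if u p = i then tau (v p) l * B p q l else 0)
                   + (if v p = i then tau (u p) l * B p l q else 0)"
  have "(\<Sum>p\<in>I. \<Sum>q<Q. x q * (\<Sum>l<Q. ?F p q l)) = (\<Sum>q<Q. \<Sum>p\<in>I. x q * (\<Sum>l<Q. ?F p q l))"
    by (rule sum.swap)
  also have "\<dots> = (\<Sum>q<Q. x q * (\<Sum>p\<in>I. \<Sum>l<Q. ?F p q l))"
    by (simp only: sum_distrib_left)
  also have "\<dots> = (\<Sum>q<Q. x q * (\<Sum>l<Q. \<Sum>p\<in>I. ?F p q l))"
    by (simp only: sum.swap[of _ I])
  finally have swap: "(\<Sum>p\<in>I. \<Sum>q<Q. x q * (\<Sum>l<Q. ?F p q l))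
      = (\<Sum>q<Q. x q * (\<Sum>l<Q. \<Sum>p\<in>I. ?F p q l))" .
  have "\<And>p. p \<in> I \<Longrightarrow> (\<Sum>l1<Q. \<Sum>l2<Q. (tau(i := x)) (u p) l1 * (tau(i := x)) (v p) l2 * B p l1 l2)
    = (\<Sum>l1<Q. \<Sum>l2<Q. (tau(i := (\<lambda>_. 0))) (u p) l1 * (tau(i := (\<lambda>_. 0))) (v p) l2 * B p l1 l2)
      + (\<Sum>q<Q. x q * (\<Sum>l<Q. ?F p q l))"
    using assms by (intro bilinear_fun_upd_row) auto
  then show ?thesis
    unfolding swap[symmetric] sum.distrib[symmetric] by (rule sum.cong[OF refl])
qed

locale poisson_sbm =
  fixes n Q M :: nat and piv :: "nat \<Rightarrow> real" and alpha :: "nat \<Rightarrow> nat \<Rightarrow> real \<Rightarrow> real"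
    and T :: real and t :: "nat \<Rightarrow> real" and ii jj :: "nat \<Rightarrow> nat"
  assumes piv_pos: "\<forall>q<Q. 0 < piv q"
    and alpha_pos_events: "\<forall>q<Q. \<forall>l<Q. \<forall>m<M. 0 < alpha q l (t m)"
    and events_ind: "\<forall>m<M. ii m < n \<and> jj m < n \<and> ii m \<noteq> jj m"
    and Q_pos: "0 < Q"
begin

abbreviation "lik \<equiv> complete_lik n piv alpha T M t ii jj"
abbreviation "post \<equiv> posterior n Q piv alpha T M t ii jj"

definition "evidence = (\<Sum>z\<in>configs n Q. lik z)"

lemma complete_lik_pos: "z \<in> configs n Q \<Longrightarrow> 0 < lik z"
  unfolding complete_lik_def using piv_pos alpha_pos_events events_ind
  by (intro mult_pos_pos prod_pos) (auto simp: configs_lessThan)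

lemma evidence_pos: "0 < evidence"
  unfolding evidence_def using configs_nonempty[OF Q_pos] complete_lik_pos configs_finite
  by (intro sum_pos) auto

lemma posterior_pos: "z \<in> configs n Q \<Longrightarrow> 0 < post z"
  using complete_lik_pos evidence_pos unfolding posterior_def evidence_def[symmetric] by simp

lemma ln_complete_lik:
  assumes z: "z \<in> configs n Q"
  shows "ln (lik z) = (\<Sum>m<M. ln (alpha (z (ii m)) (z (jj m)) (t m))) + (\<Sum>k<n. ln (piv (z k)))
      - (\<Sum>(a, b)\<in>dyads n. cumint alpha (z a) (z b) T)"
proof -
  have events: "\<And>m. m \<in> {..<M} \<Longrightarrow> 0 < alpha (z (ii m)) (z (jj m)) (t m)"
    using alpha_pos_events events_ind z by (auto simp: configs_lessThan)
  have prior: "\<And>k. k \<in> {..<n} \<Longrightarrow> 0 < piv (z k)"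
    using piv_pos z by (auto simp: configs_lessThan)
  have ln_events: "ln (\<Prod>m<M. alpha (z (ii m)) (z (jj m)) (t m))
      = (\<Sum>m<M. ln (alpha (z (ii m)) (z (jj m)) (t m)))"
    using events by (intro ln_prod) force+
  have ln_prior: "ln (\<Prod>k<n. piv (z k)) = (\<Sum>k<n. ln (piv (z k)))"
    using prior by (intro ln_prod) force+
  have "0 < (\<Prod>m<M. alpha (z (ii m)) (z (jj m)) (t m))" "0 < (\<Prod>k<n. piv (z k))"
    using events prior by (auto intro: prod_pos)
  then show ?thesis
    unfolding complete_lik_def by (simp add: ln_mult_pos ln_events ln_prior)
qed

definition "neg_entropy tau = (\<Sum>k<n. \<Sum>l<Q. tau k l * ln (tau k l))"
definition "expected_log_prior tau = (\<Sum>k<n. \<Sum>l<Q. tau k l * ln (piv l))"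
definition "expected_log_intensity tau =
  (\<Sum>m<M. \<Sum>l1<Q. \<Sum>l2<Q. tau (ii m) l1 * tau (jj m) l2 * ln (alpha l1 l2 (t m)))"
definition "expected_compensator tau =
  (\<Sum>(a, b)\<in>dyads n. \<Sum>l1<Q. \<Sum>l2<Q. tau a l1 * tau b l2 * cumint alpha l1 l2 T)"
definition "free_energy tau =
  neg_entropy tau + expected_compensator tau - expected_log_intensity tau - expected_log_prior tau"

lemma expected_ln_complete_lik:
  assumes tau: "tau \<in> var_params n Q"
  shows "factorized_expectation n Q tau (\<lambda>z. ln (lik z))
       = expected_log_intensity tau + expected_log_prior tau - expected_compensator tau"
proof -
  have "factorized_expectation n Q tau (\<lambda>z. \<Sum>m<M. ln (alpha (z (ii m)) (z (jj m)) (t m)))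
      = expected_log_intensity tau"
    unfolding factorized_expectation_sum expected_log_intensity_def
  proof (intro sum.cong refl)
    fix m assume "m \<in> {..<M}"
    then show "factorized_expectation n Q tau (\<lambda>z. ln (alpha (z (ii m)) (z (jj m)) (t m)))
        = (\<Sum>l1<Q. \<Sum>l2<Q. tau (ii m) l1 * tau (jj m) l2 * ln (alpha l1 l2 (t m)))"
      using events_ind factorized_expectation_pair[OF tau, where \<phi>="\<lambda>l1 l2. ln (alpha l1 l2 (t m))"]
      by simp
  qed
  moreover have "factorized_expectation n Q tau (\<lambda>z. \<Sum>k<n. ln (piv (z k))) = expected_log_prior tau"
    unfolding factorized_expectation_sum expected_log_prior_def
    by (intro sum.cong refl)
      (simp add: factorized_expectation_coordinate[OF tau, where \<phi>="\<lambda>l. ln (piv l)"])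
  moreover have "factorized_expectation n Q tau (\<lambda>z. \<Sum>(a, b)\<in>dyads n. cumint alpha (z a) (z b) T)
      = expected_compensator tau"
    unfolding factorized_expectation_sum expected_compensator_def
    by (intro sum.cong refl) (auto simp: dyads_def
        factorized_expectation_pair[OF tau, where \<phi>="\<lambda>l1 l2. cumint alpha l1 l2 T"])
  ultimately show ?thesis
    by (simp add: factorized_expectation_cong[OF ln_complete_lik] factorized_expectation_add
        factorized_expectation_diff)
qed

lemma KL_factorized_posterior:
  assumes tau: "tau \<in> var_params n Q"
  shows "KL (configs n Q) (factorized n tau) post = ereal (free_energy tau + ln evidence)"
proof -
  let ?f = "factorized n tau"
  have pointwise: "?f z * ln (?f z / post z)
      = ?f z * ((\<Sum>k<n. ln (tau k (z k))) - ln (lik z) + ln evidence)"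
    if z: "z \<in> configs n Q" and "?f z \<noteq> 0" for z
  proof -
    have "\<forall>k\<in>{..<n}. 0 < tau k (z k)"
      using \<open>?f z \<noteq> 0\<close> tau configs_lessThan[OF z]
      by (force simp: factorized_def var_params_def less_le)
    then have "ln (?f z) = (\<Sum>k<n. ln (tau k (z k)))"
      unfolding factorized_def by (intro ln_prod) force+
    moreover have "0 < ?f z"
      using \<open>\<forall>k\<in>{..<n}. 0 < tau k (z k)\<close> unfolding factorized_def by (intro prod_pos) blast
    ultimately show ?thesis
      using complete_lik_pos[OF z] evidence_pos
      unfolding posterior_def evidence_def[symmetric] by (simp add: ln_div ln_mult_pos)
  qed
  have "KL (configs n Q) ?f post = ereal (factorized_expectation n Q tau
      (\<lambda>z. (\<Sum>k<n. ln (tau k (z k))) - ln (lik z) + ln evidence))"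
    unfolding KL_def factorized_expectation_def using posterior_pos pointwise
    by (auto intro!: sum.cong simp: less_imp_neq[symmetric])
  also have "factorized_expectation n Q tau (\<lambda>z. \<Sum>k<n. ln (tau k (z k))) = neg_entropy tau"
    unfolding factorized_expectation_sum neg_entropy_def
  proof (intro sum.cong refl)
    fix k assume "k \<in> {..<n}"
    then show "factorized_expectation n Q tau (\<lambda>z. ln (tau k (z k))) = (\<Sum>l<Q. tau k l * ln (tau k l))"
      using factorized_expectation_coordinate[OF tau, where \<phi>="\<lambda>l. ln (tau k l)"] by simp
  qed
  then have "factorized_expectation n Q tau
      (\<lambda>z. (\<Sum>k<n. ln (tau k (z k))) - ln (lik z) + ln evidence) = free_energy tau + ln evidence"
    unfolding factorized_expectation_add factorized_expectation_diff
      expected_ln_complete_lik[OF tau] factorized_expectation_const[OF tau] free_energy_def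
    by simp
  finally show ?thesis .
qed

lemma free_energy_fun_upd_row:
  assumes i: "i < n"
  shows "free_energy (tau(i := x))
       = (\<Sum>q<Q. x q * ln (x q) - x q * (ln (piv q) + Dfun n Q alpha T M t ii jj tau i q))
         + free_energy (tau(i := (\<lambda>_. 0)))"
proof -
  let ?B = "\<lambda>l1 l2. cumint alpha l1 l2 T"
  have "neg_entropy (tau(i := x)) = (\<Sum>q<Q. x q * ln (x q)) + neg_entropy (tau(i := (\<lambda>_. 0)))"
    unfolding neg_entropy_def
    using sum_fun_upd_row[OF i, of "\<lambda>k r. \<Sum>l<Q. r l * ln (r l)" tau] by simp
  moreover have "expected_log_prior (tau(i := x))
      = (\<Sum>q<Q. x q * ln (piv q)) + expected_log_prior (tau(i := (\<lambda>_. 0)))"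
    unfolding expected_log_prior_def
    using sum_fun_upd_row[OF i, of "\<lambda>k r. \<Sum>l<Q. r l * ln (piv l)" tau] by simp
  moreover have "expected_log_intensity (tau(i := x)) = expected_log_intensity (tau(i := (\<lambda>_. 0)))
      + (\<Sum>q<Q. x q * (\<Sum>l<Q. \<Sum>m<M. (if ii m = i then tau (jj m) l * ln (alpha q l (t m)) else 0)
                                   + (if jj m = i then tau (ii m) l * ln (alpha l q (t m)) else 0)))"
    unfolding expected_log_intensity_def using events_ind
    by (subst bilinear_sum_fun_upd_row) auto
  moreover have "expected_compensator (tau(i := x)) = expected_compensator (tau(i := (\<lambda>_. 0)))
      + (\<Sum>q<Q. x q * (\<Sum>l<Q. \<Sum>j\<in>{..<n} - {i}. tau j l * (?B q l + ?B l q)))"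
  proof -
    have "(\<Sum>(a, b)\<in>dyads n. (if a = i then tau b l * ?B q l else 0) + (if b = i then tau a l * ?B l q else 0))
        = (\<Sum>j\<in>{..<n} - {i}. tau j l * (?B q l + ?B l q))" for q l
      using sum_dyads_if_fst[OF i, of "\<lambda>b. tau b l * ?B q l"]
        sum_dyads_if_snd[OF i, of "\<lambda>a. tau a l * ?B l q"]
      by (simp add: sum.distrib case_prod_unfold distrib_left)
    then show ?thesis
      unfolding expected_compensator_def case_prod_unfold
      by (subst bilinear_sum_fun_upd_row) (auto simp: dyads_def)
  qed
  ultimately show ?thesis
    unfolding free_energy_def Dfun_def
    by (simp add: sum.distrib sum_subtractf distrib_left right_diff_distrib algebra_simps)
qed

lemma free_energy_minimizer_fixed_point:
  assumes tau: "tau \<in> var_params n Q"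
    and min: "\<forall>tau'\<in>var_params n Q. free_energy tau \<le> free_energy tau'"
    and i: "i < n" and q: "q < Q"
  shows "tau i q = piv q * exp (Dfun n Q alpha T M t ii jj tau i q) /
           (\<Sum>q'<Q. piv q' * exp (Dfun n Q alpha T M t ii jj tau i q'))"
proof -
  have row_nonneg: "\<forall>q\<in>{..<Q}. 0 \<le> tau i q" and row_sum: "sum (tau i) {..<Q} = 1"
    using tau i by (auto simp: var_params_def)
  define c where "c q = ln (piv q) + Dfun n Q alpha T M t ii jj tau i q" for q
  define s where "s q = exp (c q) / (\<Sum>q'<Q. exp (c q'))" for q
  have "0 < (\<Sum>q'<Q. exp (c q'))"
    using Q_pos by (intro sum_pos) auto
  then have "\<forall>q<Q. 0 \<le> s q" "(\<Sum>q<Q. s q) = 1"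
    unfolding s_def by (auto simp: sum_divide_distrib[symmetric])
  then have "free_energy tau \<le> free_energy (tau(i := s))"
    using min tau by (auto simp: var_params_def)
  then have "(\<Sum>q<Q. tau i q * ln (tau i q) - tau i q * c q) \<le> (\<Sum>q<Q. s q * ln (s q) - s q * c q)"
    using free_energy_fun_upd_row[OF i, of tau "tau i"] free_energy_fun_upd_row[OF i, of tau s]
    unfolding c_def by (simp add: algebra_simps)
  then have "\<forall>q\<in>{..<Q}. tau i q = s q"
    unfolding s_def by (intro softmax_unique_minimizer[OF _ row_nonneg row_sum]) simp_all
  moreover have pi_exp_D: "piv q' * exp (Dfun n Q alpha T M t ii jj tau i q') = exp (c q')"
    if "q' < Q" for q'
    using piv_pos that by (simp add: c_def exp_add)
  then have "(\<Sum>q'<Q. piv q' * exp (Dfun n Q alpha T M t ii jj tau i q')) = (\<Sum>q'<Q. exp (c q'))"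
    by (intro sum.cong) auto
  ultimately show ?thesis
    using pi_exp_D[OF q] q by (simp add: s_def)
qed

end

theorem proposition3:
  fixes n Q M :: nat
    and piv :: "nat \<Rightarrow> real"
    and alpha :: "nat \<Rightarrow> nat \<Rightarrow> real \<Rightarrow> real"
    and T :: real
    and t :: "nat \<Rightarrow> real"
    and ii jj :: "nat \<Rightarrow> nat"
    and tauhat :: "nat \<Rightarrow> nat \<Rightarrow> real"
  assumes pi_pos: "\<forall>q<Q. 0 < piv q"
    and pi_sum: "(\<Sum>q<Q. piv q) = 1"
    and alpha_nonneg: "\<forall>q<Q. \<forall>l<Q. \<forall>s. 0 \<le> alpha q l s"
    and alpha_int: "\<forall>q<Q. \<forall>l<Q. alpha q l integrable_on {0..T}"
    and alpha_pos_events: "\<forall>q<Q. \<forall>l<Q. \<forall>m<M. 0 < alpha q l (t m)"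
    and events_ind: "\<forall>m<M. ii m < n \<and> jj m < n \<and> ii m \<noteq> jj m"
    and times_pos: "M > 0 \<longrightarrow> 0 < t 0"
    and times_incr: "\<forall>m. Suc m < M \<longrightarrow> t m < t (Suc m)"
    and times_lt_T: "\<forall>m<M. t m < T"
    and tauhat_in: "tauhat \<in> var_params n Q"
    and tauhat_min: "\<forall>tau\<in>var_params n Q.
          KL (configs n Q) (factorized n tauhat) (posterior n Q piv alpha T M t ii jj)
          \<le> KL (configs n Q) (factorized n tau) (posterior n Q piv alpha T M t ii jj)"
  shows "\<forall>i<n. \<forall>q<Q. tauhat i q =
           piv q * exp (Dfun n Q alpha T M t ii jj tauhat i q) /
           (\<Sum>q'<Q. piv q' * exp (Dfun n Q alpha T M t ii jj tauhat i q'))"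
proof (intro allI impI)
  fix i q
  assume "i < n" "q < Q"
  then interpret poisson_sbm n Q M piv alpha T t ii jj
    using pi_pos alpha_pos_events events_ind by unfold_locales auto
  have "\<forall>tau\<in>var_params n Q. free_energy tauhat \<le> free_energy tau"
    using tauhat_min KL_factorized_posterior[OF tauhat_in] KL_factorized_posterior
    by (metis ereal_less_eq(3) add_le_cancel_right)
  then show "tauhat i q = piv q * exp (Dfun n Q alpha T M t ii jj tauhat i q) /
      (\<Sum>q'<Q. piv q' * exp (Dfun n Q alpha T M t ii jj tauhat i q'))"
    using free_energy_minimizer_fixed_point[OF tauhat_in] \<open>i < n\<close> \<open>q < Q\<close> by blast
qed

end
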